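(* Let $k'\geq 2$, $h\geq 1$ and $r$ be integers with $1\leq r\leq k'-1$, and let $n'=hk'+r$. Then there exist positive integers $s$ and $k$ such that $C_{sk}^k$ has a minor isomorphic to $C_{n'}^{k'}$ if and only if $r\leq h-1$.
   Context: For integers $n\geq2$, $1\leq k\leq n-1$, $\mathbb{Z}_n=\{0,\dots,n-1\}$ with addition modulo $n$, and $C_n^k$ is the $n\times n$ circulant $0,1$ matrix whose $i$-th row ($i\in\mathbb{Z}_n$) is the incidence vector of $\{i,i+1,\dots,i+k-1\}$ (mod $n$). For a $0,1$ matrix $A$ with columns indexed by $\mathbb{Z}_n$ and $N\subset\mathbb{Z}_n$, the minor $A/N$ (obtained by contraction of $N$) is the submatrix obtained by removing the columns indexed by $N$ and then removing all dominating rows (a row $v$ is dominating if $v\geq u$ for some other row $u\neq v$). "Minor" always means a minor obtained by contraction; two matrices are isomorphic if one is obtained from the other by permuting rows and columns. *)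

theory Defs
  imports Main
begin

text \<open>A 0,1 matrix is represented by its column index set together with the
  set of its rows, each row being given by its support (a set of column indices).\<close>

type_synonym matrix01 = "nat set \<times> nat set set"

definition circ :: "nat \<Rightarrow> nat \<Rightarrow> matrix01" where
  "circ n k = ({0..<n}, {{(i + j) mod n | j. j < k} | i. i < n})"

definition contract :: "matrix01 \<Rightarrow> nat set \<Rightarrow> matrix01" where
  "contract A N =
     (let R = (\<lambda>v. v - N) ` snd A
      in (fst A - N, {v \<in> R. \<not> (\<exists>u\<in>R. u \<noteq> v \<and> u \<subseteq> v)}))"

text \<open>Isomorphism: permutation of rows and columns.\<close>
definition iso01 :: "matrix01 \<Rightarrow> matrix01 \<Rightarrow> bool" where
  "iso01 A B \<longleftrightarrow> (\<exists>f. bij_betw f (fst A) (fst B) \<and> (\<lambda>v. f ` v) ` snd A = snd B)"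

definition has_minor_iso :: "matrix01 \<Rightarrow> matrix01 \<Rightarrow> bool" where
  "has_minor_iso A B \<longleftrightarrow> (\<exists>N. N \<subseteq> fst A \<and> iso01 (contract A N) B)"

end

theory Submission
  imports Defs "HOL-Number_Theory.Cong"
begin

text \<open>
  Contracting the columns N of C_{sk}^k leaves the kept columns C, and the rows of the minor are
  the minimal sets among the traces window \<inter> C of the rows. A minimal trace is always the trace
  of the window starting just after a kept column (the last kept column before it). If the minor
  is C_{n'}^{k'}, there are n' = |C| such traces, all of size k'; hence each window after a kept
  column meets C in exactly k' columns, and any window meets C in at least k' and at most k' + 1
  columns. Cutting Z_{sk} into s consecutive windows gives s k' \<le> n' \<le> k' + (s - 1)(k' + 1),
  which forces s \<le> h and then r \<le> s - 1 \<le> h - 1.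
  Conversely, if r < h, keeping the multiples of h in C_{hn'}^{n'} gives C_{n'}^{k'}: every window
  of length n' = hk' + r contains k' consecutive kept multiples of h, and the windows starting
  r positions before a multiple of h contain exactly those.
\<close>

section \<open>Cyclic intervals\<close>

definition window :: "nat \<Rightarrow> nat \<Rightarrow> nat \<Rightarrow> nat set" where
  "window n k a = {(a + j) mod n | j. j < k}"

lemma window_eq_image: "window n k a = (\<lambda>j. (a + j) mod n) ` {0..<k}"
  by (auto simp: window_def)

lemma mem_window: "x \<in> window n k a \<longleftrightarrow> (\<exists>j<k. x = (a + j) mod n)"
  by (auto simp: window_def)

lemma finite_window [simp]: "finite (window n k a)"
  by (simp add: window_eq_image)

lemma window_subset: "0 < n \<Longrightarrow> window n k a \<subseteq> {0..<n}"
  by (auto simp: window_def)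

lemma window_mod_eq: "a mod n = b mod n \<Longrightarrow> window n k a = window n k b"
  unfolding window_eq_image by (metis mod_add_left_eq)

lemma window_mono: "k \<le> m \<Longrightarrow> window n k a \<subseteq> window n m a"
  unfolding window_eq_image by (rule image_mono) simp

lemma window_add_length: "window n (i + k) a = window n i a \<union> window n k (a + i)"
proof
  show "window n (i + k) a \<subseteq> window n i a \<union> window n k (a + i)"
  proof
    fix x assume "x \<in> window n (i + k) a"
    then obtain j where "j < i + k" "x = (a + j) mod n" by (auto simp: mem_window)
    then show "x \<in> window n i a \<union> window n k (a + i)"
    proof (cases "j < i")
      case False
      then have "x = (a + i + (j - i)) mod n" using \<open>x = (a + j) mod n\<close> by simp
      moreover have "j - i < k" using \<open>j < i + k\<close> False by simp
      ultimately have "x \<in> window n k (a + i)" unfolding mem_window by blast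
      then show ?thesis by simp
    qed (auto simp: mem_window)
  qed
  have "window n k (a + i) \<subseteq> window n (i + k) a"
  proof
    fix x assume "x \<in> window n k (a + i)"
    then obtain j where "j < k" "x = (a + (i + j)) mod n" by (auto simp: mem_window add.assoc)
    then show "x \<in> window n (i + k) a" unfolding mem_window by (intro exI[of _ "i + j"]) simp
  qed
  then show "window n i a \<union> window n k (a + i) \<subseteq> window n (i + k) a"
    using window_mono[of i "i + k"] by auto
qed

lemma window_subset_insert_Suc: "window n k a \<subseteq> insert (a mod n) (window n k (Suc a))"
proof
  fix x assume "x \<in> window n k a"
  then obtain j where "j < k" "x = (a + j) mod n" by (auto simp: mem_window)
  then show "x \<in> insert (a mod n) (window n k (Suc a))"
  proof (cases j)
    case (Suc j')
    then have "x = (Suc a + j') mod n" using \<open>x = (a + j) mod n\<close> by simp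
    moreover have "j' < k" using \<open>j < k\<close> Suc by simp
    ultimately have "x \<in> window n k (Suc a)" unfolding mem_window by blast
    then show ?thesis by simp
  qed simp
qed

lemma inj_on_add_mod: "inj_on (\<lambda>j. (a + j) mod n) {0..<n}" for a n :: nat
proof (rule inj_onI)
  fix i j assume "i \<in> {0..<n}" "j \<in> {0..<n}" "(a + i) mod n = (a + j) mod n"
  then show "i = j"
    using cong_add_lcancel_nat[of a i j n] by (simp add: cong_def)
qed

lemma card_window: "k \<le> n \<Longrightarrow> card (window n k a) = k"
  unfolding window_eq_image
  by (subst card_image) (auto intro: inj_on_subset[OF inj_on_add_mod])

lemma window_full: "0 < n \<Longrightarrow> window n n a = {0..<n}"
  by (rule card_subset_eq) (simp_all add: window_subset card_window)

lemma inj_on_window: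
  assumes "0 < k" "k < n"
  shows "inj_on (window n k) {0..<n}"
proof (rule inj_onI)
  fix a b assume a: "a \<in> {0..<n}" and b: "b \<in> {0..<n}" and eq: "window n k a = window n k b"
  have pred_notin: "(c + (n - 1)) mod n \<notin> window n k c" for c
    using inj_on_add_mod[of c n, THEN inj_onD, of "n - 1"] assms
    by (fastforce simp: mem_window)
  obtain j where j: "j < k" "b = (a + j) mod n"
    using eq assms b by (metis mem_window add_0_right atLeastLessThan_iff mod_less)
  have "j = 0"
  proof (rule ccontr)
    assume "j \<noteq> 0"
    then have "a + j + (n - 1) = a + (j - 1) + n" using assms by simp
    then have "(b + (n - 1)) mod n = (a + (j - 1)) mod n"
      using j(2) by (metis mod_add_left_eq mod_add_self2)
    moreover have "j - 1 < k" using j by simp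
    ultimately have "(b + (n - 1)) mod n \<in> window n k a" unfolding mem_window by blast
    then show False using pred_notin[of b] eq by simp
  qed
  then show "a = b" using a j by simp
qed

lemma window_inter_shift:
  assumes "\<forall>j<i. (a + j) mod n \<notin> C"
  shows "window n k a \<inter> C \<subseteq> window n k (a + i)"
proof
  fix x assume "x \<in> window n k a \<inter> C"
  then obtain j where j: "j < k" "x = (a + j) mod n" "x \<in> C" by (auto simp: mem_window)
  then have "i \<le> j" using assms by (meson not_le)
  then have "x = (a + i + (j - i)) mod n" using j by simp
  moreover have "j - i < k" using j by simp
  ultimately show "x \<in> window n k (a + i)" unfolding mem_window by blast
qed

lemma ex_window_Suc_inter_subset:
  assumes "C \<subseteq> {0..<n}" "C \<noteq> {}"
  shows "\<exists>d\<in>C. window n k (Suc d) \<inter> C \<subseteq> window n k b"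
proof -
  have n: "0 < n" using assms by auto
  obtain x where "x \<in> C" using assms by blast
  then have "x \<in> window n n b" using assms window_full[OF n, of b] by auto
  then obtain j0 where "j0 < n" "(b + j0) mod n \<in> C" using \<open>x \<in> C\<close> by (auto simp: mem_window)
  then obtain j where j: "j < n" "(b + j) mod n \<in> C"
    and last: "\<And>i. i < n \<Longrightarrow> (b + i) mod n \<in> C \<Longrightarrow> i \<le> j"
    using Nat.ex_has_greatest_nat[of "\<lambda>j. j < n \<and> (b + j) mod n \<in> C" j0 n] by auto
  \<comment> \<open>so (b + j) mod n is the last kept column before b, cyclically\<close>
  have gap: "\<forall>i<n - Suc j. (b + Suc j + i) mod n \<notin> C"
  proof (intro allI impI)
    fix i assume "i < n - Suc j"
    then show "(b + Suc j + i) mod n \<notin> C"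
      using last[of "Suc j + i"] by (auto simp: add.assoc less_diff_conv)
  qed
  have "window n k (Suc ((b + j) mod n)) = window n k (b + Suc j)"
    by (rule window_mod_eq) (simp add: mod_Suc_eq)
  moreover have "window n k (b + Suc j + (n - Suc j)) = window n k b"
    using j by (intro window_mod_eq) simp
  ultimately have "window n k (Suc ((b + j) mod n)) \<inter> C \<subseteq> window n k b"
    using window_inter_shift[OF gap, of k] by metis
  then show ?thesis using j by blast
qed

lemma window_inter_subset_insert:
  assumes "window n k a \<inter> C \<noteq> {}"
  shows "\<exists>d\<in>C. window n k a \<inter> C \<subseteq> insert d (window n k (Suc d) \<inter> C)"
proof -
  have "\<exists>j. j < k \<and> (a + j) mod n \<in> C" using assms by (auto simp: mem_window)
  then obtain j where j: "j < k" "(a + j) mod n \<in> C"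
    and least: "\<And>i. i < j \<Longrightarrow> \<not> (i < k \<and> (a + i) mod n \<in> C)"
    unfolding exists_least_iff[of "\<lambda>j. j < k \<and> (a + j) mod n \<in> C"] by blast
  \<comment> \<open>(a + j) mod n is the first kept column of the window\<close>
  have first: "\<And>i. i < j \<Longrightarrow> (a + i) mod n \<notin> C"
    using least j(1) by (meson order.strict_trans)
  have "window n k a \<inter> C \<subseteq> window n k (a + j) \<inter> C"
    using window_inter_shift[of j a n C k] first by auto
  also have "\<dots> \<subseteq> insert ((a + j) mod n) (window n k (Suc (a + j)) \<inter> C)"
    using window_subset_insert_Suc[of n k "a + j"] by auto
  also have "window n k (Suc (a + j)) = window n k (Suc ((a + j) mod n))"
    by (rule window_mod_eq) (simp add: mod_Suc_eq)
  finally show ?thesis using j by blast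
qed

lemma card_window_inter_le:
  assumes "\<And>d. d \<in> C \<Longrightarrow> card (window n k (Suc d) \<inter> C) \<le> m"
  shows "card (window n k a \<inter> C) \<le> Suc m"
proof (cases "window n k a \<inter> C = {}")
  case False
  then obtain d where "d \<in> C" and sub: "window n k a \<inter> C \<subseteq> insert d (window n k (Suc d) \<inter> C)"
    using window_inter_subset_insert by blast
  have "card (window n k a \<inter> C) \<le> card (insert d (window n k (Suc d) \<inter> C))"
    using sub by (intro card_mono) auto
  also have "\<dots> \<le> Suc (card (window n k (Suc d) \<inter> C))"
    by (simp add: card_insert_le_m1 card_insert_if)
  finally show ?thesis using assms[OF \<open>d \<in> C\<close>] by simp
qed simp

lemma window_add_eq_image: "window n k (a + m) = (\<lambda>j. (a + j) mod n) ` {m..<m + k}"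
proof -
  have "window n k (a + m) = (\<lambda>j. (a + j) mod n) ` ((+) m ` {0..<k})"
    by (simp only: window_eq_image image_image add.assoc)
  also have "(+) m ` {0..<k} = {m..<m + k}" by (simp add: add.commute)
  finally show ?thesis .
qed

lemma card_eq_sum_windows:
  assumes "0 < s" "0 < k" "C \<subseteq> {0..<s * k}"
  shows "card C = (\<Sum>t<s. card (window (s * k) k (a + t * k) \<inter> C))"
proof -
  define n where "n = s * k"
  define f where "f = (\<lambda>j. (a + j) mod n)"
  define I where "I = (\<lambda>t. {t * k..<t * k + k})"
  have win: "window n k (a + t * k) = f ` I t" for t
    by (simp add: window_add_eq_image f_def I_def)
  have I_sub: "I t \<subseteq> {0..<n}" if "t < s" for t
  proof -
    have "t * k + k \<le> s * k" using that by (metis add.commute mult_Suc less_eq_Suc_le mult_le_mono1)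
    then show ?thesis by (auto simp: I_def n_def)
  qed
  have "{0..<n} \<subseteq> (\<Union>t<s. I t)"
  proof
    fix j assume "j \<in> {0..<n}"
    then have "j div k < s" by (simp add: n_def less_mult_imp_div_less)
    moreover have "j \<in> I (j div k)"
      using assms(2) by (auto simp: I_def) (metis div_mult_mod_eq mod_less_divisor add_less_cancel_left)
    ultimately show "j \<in> (\<Union>t<s. I t)" by blast
  qed
  then have "f ` {0..<n} \<subseteq> (\<Union>t<s. f ` I t)" by blast
  moreover have "f ` {0..<n} = {0..<n}"
    using window_full[of n a] assms by (simp add: n_def window_eq_image f_def)
  ultimately have "{0..<n} \<subseteq> (\<Union>t<s. f ` I t)" by simp
  then have C_eq: "C = (\<Union>t<s. window n k (a + t * k) \<inter> C)"
    using assms(3)[folded n_def] by (auto simp: win)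
  have "f ` I t \<inter> f ` I t' = {}" if "t < s" "t' < s" "t \<noteq> t'" for t t'
  proof -
    have "I t \<inter> I t' = {}"
    proof (cases "t < t'")
      case True
      then have "t * k + k \<le> t' * k" by (metis add.commute mult_Suc less_eq_Suc_le mult_le_mono1)
      then show ?thesis by (auto simp: I_def)
    next
      case False
      then have "t' * k + k \<le> t * k" using that
        by (metis add.commute mult_Suc less_eq_Suc_le mult_le_mono1 linorder_neqE_nat)
      then show ?thesis by (auto simp: I_def)
    qed
    then show ?thesis
      using inj_on_image_Int[OF inj_on_add_mod[of a n] I_sub[OF that(1)] I_sub[OF that(2)]]
      by (simp add: f_def)
  qed
  then have "card (\<Union>t<s. window n k (a + t * k) \<inter> C) = (\<Sum>t<s. card (window n k (a + t * k) \<inter> C))"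
    by (intro card_UN_disjoint) (auto simp: win I_def)
  then show ?thesis using C_eq by (simp add: n_def)
qed

section \<open>Contraction minors of circulant matrices\<close>

definition minimal_sets :: "'a set set \<Rightarrow> 'a set set" where
  "minimal_sets R = {v \<in> R. \<not> (\<exists>u\<in>R. u \<noteq> v \<and> u \<subseteq> v)}"

lemma minimal_sets_subset: "minimal_sets R \<subseteq> R"
  by (auto simp: minimal_sets_def)

lemma minimal_setsD: "u \<in> minimal_sets R \<Longrightarrow> v \<in> R \<Longrightarrow> v \<subseteq> u \<Longrightarrow> v = u"
  by (auto simp: minimal_sets_def)

lemma ex_minimal_sets_subset:
  assumes "finite R" "v \<in> R"
  shows "\<exists>u\<in>minimal_sets R. u \<subseteq> v"
  using finite_has_minimal2[OF assms] unfolding minimal_sets_def by blast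

lemma minimal_sets_eqI:
  assumes "T \<subseteq> R" and below: "\<And>v. v \<in> R \<Longrightarrow> \<exists>t\<in>T. t \<subseteq> v"
    and "\<And>t. t \<in> T \<Longrightarrow> finite t" and "\<And>t. t \<in> T \<Longrightarrow> card t = m"
  shows "minimal_sets R = T"
proof
  show "minimal_sets R \<subseteq> T"
  proof
    fix u assume u: "u \<in> minimal_sets R"
    then obtain t where "t \<in> T" "t \<subseteq> u" using below minimal_sets_subset by blast
    then have "t = u" using minimal_setsD[OF u] \<open>T \<subseteq> R\<close> by blast
    then show "u \<in> T" using \<open>t \<in> T\<close> by simp
  qed
  show "T \<subseteq> minimal_sets R"
  proof
    fix t assume "t \<in> T"
    have "u = t" if "u \<in> R" "u \<subseteq> t" for u
    proof -
      obtain t' where "t' \<in> T" "t' \<subseteq> u" using below[OF \<open>u \<in> R\<close>] by blast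
      moreover have "card t' = card t" using assms(4) \<open>t \<in> T\<close> \<open>t' \<in> T\<close> by simp
      ultimately have "t' = t"
        using card_subset_eq[OF assms(3)[OF \<open>t \<in> T\<close>]] that(2) by blast
      then show "u = t" using \<open>t' \<subseteq> u\<close> that by blast
    qed
    then show "t \<in> minimal_sets R" using \<open>t \<in> T\<close> \<open>T \<subseteq> R\<close> by (auto simp: minimal_sets_def)
  qed
qed

lemma fst_circ: "fst (circ n k) = {0..<n}"
  by (simp add: circ_def)

lemma snd_circ: "snd (circ n k) = window n k ` {0..<n}"
  by (auto simp: circ_def window_def)

lemma card_snd_circ: "0 < k \<Longrightarrow> k < n \<Longrightarrow> card (snd (circ n k)) = n"
  by (simp add: snd_circ card_image inj_on_window)

lemma card_image_snd_circ:
  assumes "0 < n" "k \<le> n"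
  shows "card ` snd (circ n k) = {k}"
proof -
  have "card ` window n k ` {0..<n} = (\<lambda>_. k) ` {0..<n}"
    using card_window[OF assms(2)] by (simp add: image_image)
  then show ?thesis using assms(1) by (auto simp: snd_circ image_constant_conv)
qed

lemma contract_circ:
  assumes "0 < n"
  shows "contract (circ n k) N =
    ({0..<n} - N, minimal_sets ((\<lambda>a. window n k a \<inter> ({0..<n} - N)) ` {0..<n}))"
proof -
  have "window n k a - N = window n k a \<inter> ({0..<n} - N)" for a
    using window_subset[OF assms] by blast
  then show ?thesis
    by (simp add: contract_def minimal_sets_def Let_def fst_circ snd_circ image_image)
qed

lemma iso01_cards:
  assumes "iso01 A B" and rows: "\<And>v. v \<in> snd A \<Longrightarrow> v \<subseteq> fst A"
  shows "card (fst A) = card (fst B)" "card (snd A) = card (snd B)" "card ` snd A = card ` snd B"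
proof -
  obtain f where f: "bij_betw f (fst A) (fst B)" and img: "(\<lambda>v. f ` v) ` snd A = snd B"
    using assms(1) by (auto simp: iso01_def)
  have inj: "inj_on f (fst A)" using f by (simp add: bij_betw_def)
  show "card (fst A) = card (fst B)" using bij_betw_same_card[OF f] .
  have "inj_on (\<lambda>v. f ` v) (snd A)"
    by (rule inj_onI) (use inj_on_image_eq_iff[OF inj] rows in blast)
  then show "card (snd A) = card (snd B)" using img card_image by metis
  have "card (f ` v) = card v" if "v \<in> snd A" for v
    using inj_on_subset[OF inj rows[OF that]] by (simp add: card_image)
  then have "card ` snd A = (\<lambda>v. card (f ` v)) ` snd A" by (simp cong: image_cong)
  also have "\<dots> = card ` snd B" by (simp add: img[symmetric] image_image)
  finally show "card ` snd A = card ` snd B" .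
qed

lemma window_inter_in_image:
  "0 < n \<Longrightarrow> window n k a \<inter> C \<in> (\<lambda>b. window n k b \<inter> C) ` {0..<n}"
  using window_mod_eq[of a n "a mod n" k] by auto

lemma minimal_window_sets_subset:
  assumes "C \<subseteq> {0..<n}" "C \<noteq> {}"
  shows "minimal_sets ((\<lambda>a. window n k a \<inter> C) ` {0..<n}) \<subseteq> (\<lambda>d. window n k (Suc d) \<inter> C) ` C"
proof
  fix u assume u: "u \<in> minimal_sets ((\<lambda>a. window n k a \<inter> C) ` {0..<n})"
  then obtain b where b: "u = window n k b \<inter> C" using minimal_sets_subset by blast
  obtain d where "d \<in> C" "window n k (Suc d) \<inter> C \<subseteq> window n k b"
    using ex_window_Suc_inter_subset[OF assms] by blast
  moreover have "0 < n" using assms by auto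
  ultimately have "window n k (Suc d) \<inter> C = u"
    using minimal_setsD[OF u window_inter_in_image] b by blast
  then show "u \<in> (\<lambda>d. window n k (Suc d) \<inter> C) ` C" using \<open>d \<in> C\<close> by blast
qed

section \<open>Bounds for minors of C_{sk}^k and the construction\<close>

lemma circ_minor_bounds:
  assumes "0 < s" "0 < k" "0 < k'" "k' < n'"
    and iso: "iso01 (contract (circ (s * k) k) N) (circ n' k')"
  shows "s * k' \<le> n'" and "n' \<le> k' + (s - 1) * (k' + 1)"
proof -
  define n where "n = s * k"
  define C where "C = {0..<n} - N"
  define R where "R = (\<lambda>a. window n k a \<inter> C) ` {0..<n}"
  have n: "0 < n" using assms by (simp add: n_def)
  have C: "C \<subseteq> {0..<n}" by (auto simp: C_def)
  have "iso01 (C, minimal_sets R) (circ n' k')"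
    using iso contract_circ[OF n] by (simp add: n_def C_def R_def)
  moreover have "v \<subseteq> C" if "v \<in> minimal_sets R" for v
    using that minimal_sets_subset by (auto simp: R_def)
  ultimately have "card C = n'" "card (minimal_sets R) = n'" "card ` minimal_sets R = {k'}"
    using iso01_cards[of "(C, minimal_sets R)" "circ n' k'"] assms(3,4)
    by (simp_all add: fst_circ card_snd_circ card_image_snd_circ)
  then have cardC: "card C = n'" and card_rows: "card (minimal_sets R) = n'"
    and row_card: "\<And>u. u \<in> minimal_sets R \<Longrightarrow> card u = k'"
    by auto
  have "finite C" "C \<noteq> {}" using cardC assms(4) C by (auto intro: finite_subset)
  then have rows: "minimal_sets R = (\<lambda>d. window n k (Suc d) \<inter> C) ` C"
    using minimal_window_sets_subset[OF C, of k] card_image_le[of C "\<lambda>d. window n k (Suc d) \<inter> C"]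
      cardC card_rows
    by (intro card_seteq) (auto simp: R_def)
  have lower: "k' \<le> card (window n k a \<inter> C)" for a
  proof -
    obtain u where "u \<in> minimal_sets R" "u \<subseteq> window n k a \<inter> C"
      using ex_minimal_sets_subset[of R] window_inter_in_image[OF n, of k a C]
      unfolding R_def by blast
    then show ?thesis using row_card card_mono[of "window n k a \<inter> C" u] by auto
  qed
  have exact: "card (window n k (Suc d) \<inter> C) = k'" if "d \<in> C" for d
    using row_card rows that by blast
  have upper: "card (window n k a \<inter> C) \<le> Suc k'" for a
    using card_window_inter_le[of C n k k'] exact by simp
  have sum: "n' = (\<Sum>t<s. card (window n k (a + t * k) \<inter> C))" for a
    using card_eq_sum_windows[of s k C a] assms(1,2) C cardC by (simp add: n_def)
  show "s * k' \<le> n'"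
    using sum_bounded_below[of "{..<s}" k' "\<lambda>t. card (window n k (t * k) \<inter> C)"] lower sum[of 0]
    by simp
  obtain d where "d \<in> C" using cardC assms(4) by fastforce
  obtain s' where s': "s = Suc s'" using assms(1) gr0_implies_Suc by blast
  have "n' = card (window n k (Suc d) \<inter> C) + (\<Sum>t<s'. card (window n k (Suc d + Suc t * k) \<inter> C))"
    using sum[of "Suc d"] unfolding s' sum.lessThan_Suc_shift by simp
  also have "\<dots> \<le> k' + s' * Suc k'"
    using exact[OF \<open>d \<in> C\<close>] upper sum_bounded_above[of "{..<s'}" "\<lambda>t. card (window n k (Suc d + Suc t * k) \<inter> C)" "Suc k'"]
    by simp
  finally show "n' \<le> k' + (s - 1) * (k' + 1)" using s' by simp
qed

lemma window_inter_multiples: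
  assumes "0 < h" "(m - 1) * h < L" "L \<le> m * h"
  shows "window (h * n') L (q * h) \<inter> {x. h dvd x} = (\<lambda>i. i * h) ` window n' m q"
proof -
  have scale: "(q * h + t * h) mod (h * n') = ((q + t) mod n') * h" for t
    by (metis add_mult_distrib mod_mult_mult2 mult.commute)
  show ?thesis
  proof
    show "window (h * n') L (q * h) \<inter> {x. h dvd x} \<subseteq> (\<lambda>i. i * h) ` window n' m q"
    proof
      fix x assume x: "x \<in> window (h * n') L (q * h) \<inter> {x. h dvd x}"
      then obtain j where j: "j < L" "x = (q * h + j) mod (h * n')" by (auto simp: mem_window)
      then have "h dvd q * h + j" using x by (auto simp: dvd_mod_iff)
      then obtain t where t: "j = t * h" by (metis dvd_add_right_iff dvd_triv_right dvd_def mult.commute)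
      then have "t < m" using j assms(3) by (metis mult_less_cancel2 order_less_le_trans)
      moreover have "x = ((q + t) mod n') * h" using j t scale by simp
      moreover have "(q + t) mod n' \<in> window n' m q" using \<open>t < m\<close> by (auto simp: mem_window)
      ultimately show "x \<in> (\<lambda>i. i * h) ` window n' m q" by blast
    qed
    show "(\<lambda>i. i * h) ` window n' m q \<subseteq> window (h * n') L (q * h) \<inter> {x. h dvd x}"
    proof
      fix x assume "x \<in> (\<lambda>i. i * h) ` window n' m q"
      then obtain t where t: "t < m" "x = ((q + t) mod n') * h" by (auto simp: mem_window)
      then have "t * h < L" using assms(2) by (metis le_less_trans less_Suc_eq_le Suc_pred' gr_zeroI
            less_nat_zero_code mult_le_mono1)
      then show "x \<in> window (h * n') L (q * h) \<inter> {x. h dvd x}"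
        using t scale[of t] by (auto simp: mem_window)
    qed
  qed
qed

lemma circ_has_minor_keeping_multiples:
  assumes "0 < k'" "1 \<le> r" "r < h" and n': "n' = h * k' + r"
  shows "has_minor_iso (circ (h * n') n') (circ n' k')"
proof -
  define n where "n = h * n'"
  define C where "C = {x. x < n \<and> h dvd x}"
  define N where "N = {0..<n} - C"
  define g where "g = (\<lambda>i::nat. i * h)"
  define R where "R = (\<lambda>a. window n n' a \<inter> C) ` {0..<n}"
  define T where "T = (\<lambda>q. g ` window n' k' q) ` {0..<n'}"
  have h: "0 < h" and n: "0 < n" using assms by (auto simp: n_def)
  have CN: "{0..<n} - N = C" by (auto simp: N_def C_def)
  have win_C: "window n L a \<inter> C = window n L a \<inter> {x. h dvd x}" for L a
    using window_subset[OF n, of L a] by (auto simp: C_def)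
  have row: "g ` window n' k' q = window n L (q * h) \<inter> C" if "(k' - 1) * h < L" "L \<le> k' * h" for q L
    using window_inter_multiples[OF h that, of n' q] win_C[of L "q * h"] by (simp add: n_def g_def)
  have "g ` window n' k' q \<in> R" for q
  proof -
    define a where "a = (q + n' - 1) * h + (h - r)"
    \<comment> \<open>a is q h - r modulo n, so the first r columns of the window at a are not multiples of h\<close>
    have ndvd: "\<not> h dvd (a + j) mod n" if "j < r" for j
    proof -
      have "a + j = (q + n' - 1) * h + (h - r + j)" by (simp add: a_def)
      then have "h dvd a + j \<longleftrightarrow> h dvd h - r + j" by (metis dvd_add_right_iff dvd_triv_right)
      moreover have "\<not> h dvd h - r + j" by (rule nat_dvd_not_less) (use that assms in auto)
      ultimately have "\<not> h dvd a + j" by simp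
      moreover have "h dvd n" by (simp add: n_def)
      ultimately show ?thesis by (simp add: dvd_mod_iff)
    qed
    have "window n r a \<inter> C = {}"
    proof -
      have False if "x \<in> window n r a" "x \<in> C" for x
        using that ndvd by (auto simp: mem_window C_def)
      then show ?thesis by blast
    qed
    have "a + r = (q + n' - 1) * h + h" using assms by (simp add: a_def)
    also have "\<dots> = (q + n' - 1 + 1) * h" by (simp only: distrib_right mult_1)
    also have "q + n' - 1 + 1 = q + n'" using assms by simp
    finally have "(a + r) mod n = (q * h) mod n" by (simp add: n_def algebra_simps)
    then have "window n (k' * h) (a + r) = window n (k' * h) (q * h)" by (rule window_mod_eq)
    moreover note \<open>window n r a \<inter> C = {}\<close>
    moreover have "window n n' a = window n r a \<union> window n (k' * h) (a + r)"
      using window_add_length[of n r "k' * h" a] by (simp add: n' mult.commute add.commute)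
    moreover have "g ` window n' k' q = window n (k' * h) (q * h) \<inter> C"
      by (rule row) (use h assms in auto)
    ultimately have "window n n' a \<inter> C = g ` window n' k' q" by (simp add: Int_Un_distrib2)
    then show ?thesis using window_inter_in_image[OF n, of n' a C] by (simp add: R_def)
  qed
  then have "T \<subseteq> R" by (auto simp: T_def)
  moreover have "\<exists>t\<in>T. t \<subseteq> v" if "v \<in> R" for v
  proof -
    obtain a where v: "v = window n n' a \<inter> C" using \<open>v \<in> R\<close> by (auto simp: R_def)
    define Q where "Q = Suc (a div h)"
    \<comment> \<open>Q h is the first multiple of h after a, at most h columns further\<close>
    define L where "L = (k' - 1) * h + 1"
    have "a mod h < h" "a div h * h + a mod h = a" using h by simp_all
    then have shift: "a + (h - a mod h) = Q * h" unfolding Q_def mult_Suc by linarith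
    have "h + L \<le> n'" using assms by (cases k') (auto simp: L_def)
    then have "h - a mod h + L \<le> n'" by linarith
    then have "window n L (Q * h) \<subseteq> window n n' a"
      using window_add_length[of n "h - a mod h" L a] window_mono[of "h - a mod h + L" n' n a]
      unfolding shift by blast
    moreover have "g ` window n' k' (Q mod n') = window n L (Q * h) \<inter> C"
    proof -
      have "L \<le> k' * h" using h assms by (cases k') (auto simp: L_def)
      then have "g ` window n' k' Q = window n L (Q * h) \<inter> C" by (intro row) (simp_all add: L_def)
      then show ?thesis using window_mod_eq[of "Q mod n'" n' Q k'] by simp
    qed
    ultimately have "g ` window n' k' (Q mod n') \<subseteq> v" unfolding v by blast
    moreover have "g ` window n' k' (Q mod n') \<in> T" using assms by (simp add: T_def n')
    ultimately show ?thesis by blast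
  qed
  moreover have "card t = k'" if "t \<in> T" for t
  proof -
    have "k' \<le> h * k'" using h by simp
    then have "k' \<le> n'" unfolding n' by linarith
    then show ?thesis using that card_window[of k' n'] h
      by (auto simp: T_def g_def card_image inj_on_def)
  qed
  ultimately have rows: "minimal_sets R = T"
    by (intro minimal_sets_eqI) (auto simp: T_def)
  have C: "C = g ` {0..<n'}"
    using h by (auto simp: C_def g_def n_def elim!: dvdE)
  have fg: "g i div h = i" for i using h by (simp add: g_def)
  have "bij_betw (\<lambda>x. x div h) C {0..<n'}"
    by (rule bij_betw_imageI) (auto simp: C fg inj_on_def image_image)
  moreover have "(\<lambda>v. (\<lambda>x. x div h) ` v) ` T = window n' k' ` {0..<n'}"
    by (simp add: T_def image_image fg)
  moreover have "contract (circ n n') N = (C, T)"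
    using contract_circ[OF n, of n' N] by (simp add: CN R_def[symmetric] rows)
  ultimately have "iso01 (contract (circ n n') N) (circ n' k')"
    unfolding iso01_def by (auto simp: fst_circ snd_circ)
  moreover have "N \<subseteq> fst (circ n n')" by (auto simp: N_def fst_circ)
  ultimately show ?thesis unfolding has_minor_iso_def n_def[symmetric] by blast
qed

theorem mainTheorem3:
  fixes k' h r n' :: nat
  assumes "k' \<ge> 2" and "h \<ge> 1" and "1 \<le> r" and "r \<le> k' - 1" and "n' = h * k' + r"
  shows "(\<exists>s k. s > 0 \<and> k > 0 \<and> has_minor_iso (circ (s * k) k) (circ n' k'))
         \<longleftrightarrow> r \<le> h - 1"
proof
  assume "\<exists>s k. s > 0 \<and> k > 0 \<and> has_minor_iso (circ (s * k) k) (circ n' k')"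
  then obtain s k N where "0 < s" "0 < k"
    and iso: "iso01 (contract (circ (s * k) k) N) (circ n' k')"
    unfolding has_minor_iso_def by blast
  have "k' \<le> h * k'" using assms by simp
  then have "k' < n'" using assms by linarith
  with circ_minor_bounds[OF \<open>0 < s\<close> \<open>0 < k\<close> _ _ iso] assms
  have lower: "s * k' \<le> h * k' + r" and upper: "h * k' + r \<le> k' + (s - 1) * (k' + 1)"
    by auto
  have "s * k' < (h + 1) * k'" using lower assms by (simp add: algebra_simps)
  then have "s < h + 1" using mult_less_cancel2 by blast
  then have "s \<le> h" by simp
  moreover have "k' + (s - 1) * (k' + 1) = s * k' + (s - 1)"
    using \<open>0 < s\<close> by (cases s) (simp_all add: algebra_simps)
  ultimately show "r \<le> h - 1" using upper mult_le_mono1[of s h k'] by linarith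
next
  assume "r \<le> h - 1"
  then have "has_minor_iso (circ (h * n') n') (circ n' k')"
    using assms by (intro circ_has_minor_keeping_multiples) auto
  moreover have "0 < n'" using assms by simp
  ultimately show "\<exists>s k. s > 0 \<and> k > 0 \<and> has_minor_iso (circ (s * k) k) (circ n' k')"
    using assms(2) by (intro exI[of _ h] exI[of _ n']) auto
qed

end
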